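(* Let $A$ be a finite alphabet. Every regular function $f : A^* \to \mathbb{N}$ is $k$-repetitive for all integers $k \ge 1$.
   Context: A bimachine is a tuple $(A, M, \mu, \lambda)$ where $A$ is a finite alphabet, $M$ a finite monoid, $\mu : A^* \to M$ a monoid morphism and $\lambda : M \times A \times M \to \mathbb{N}$; it computes $f(w) = \sum_{i=1}^{|w|} \lambda(\mu(w[1{:}i-1]), w[i], \mu(w[i+1{:}|w|]))$. A function $A^* \to \mathbb{N}$ is regular if it is computed by a bimachine. For $k \ge 1$, a function $f : A^* \to \mathbb{N}$ is $k$-repetitive if there exists an integer $\omega_0 \ge 1$ such that for all words $\alpha, \beta, \alpha_0, u_1, \alpha_1, \dots, u_k, \alpha_k \in A^*$ and every positive multiple $\omega$ of $\omega_0$, setting $W(Z_1,\dots,Z_k) = \alpha_0 \prod_{i=1}^k u_i^{\omega Z_i} \alpha_i$ and $w = W(1,\dots,1)$, there exists a function $F : \mathbb{N}^k \to \mathbb{N}$ such that for all integers $X_1,\dots,X_k,Y_1,\dots,Y_k \ge 3$, $f(\alpha\, w^{2\omega-1} W(X_1,\dots,X_k)\, w^{\omega-1}\, W(Y_1,\dots,Y_k)\, w^{\omega}\, \beta) = F(X_1+Y_1, \dots, X_k+Y_k)$. *)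

theory Defs
  imports Main
begin

definition wpow :: "'a list \<Rightarrow> nat \<Rightarrow> 'a list" where
  "wpow u n = concat (replicate n u)"

definition monoid_morphism :: "('a list \<Rightarrow> 'm::monoid_mult) \<Rightarrow> bool" where
  "monoid_morphism mu \<longleftrightarrow> mu [] = 1 \<and> (\<forall>u v. mu (u @ v) = mu u * mu v)"

text \<open>Function computed by the bimachine (A, M, mu, lambda):
  f(w) = sum_{i=1}^{|w|} lambda(mu(w[1:i-1]), w[i], mu(w[i+1:|w|])), written 0-indexed.\<close>
definition bimachine_fun ::
  "('a list \<Rightarrow> 'm::monoid_mult) \<Rightarrow> ('m \<Rightarrow> 'a \<Rightarrow> 'm \<Rightarrow> nat) \<Rightarrow> 'a list \<Rightarrow> nat" where
  "bimachine_fun mu lam w =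
     (\<Sum>i<length w. lam (mu (take i w)) (w ! i) (mu (drop (Suc i) w)))"

text \<open>W(Z_1..Z_k) = alpha_0 u_1^{omega Z_1} alpha_1 ... u_k^{omega Z_k} alpha_k,
  with us = [u_1..u_k], als = [alpha_1..alpha_k], Z = [Z_1..Z_k].\<close>
definition Wword :: "'a list \<Rightarrow> 'a list list \<Rightarrow> 'a list list \<Rightarrow> nat \<Rightarrow> nat list \<Rightarrow> 'a list" where
  "Wword al0 us als \<omega> Z =
     al0 @ concat (map (\<lambda>i. wpow (us ! i) (\<omega> * Z ! i) @ als ! i) [0..<length us])"

definition k_repetitive :: "nat \<Rightarrow> ('a list \<Rightarrow> nat) \<Rightarrow> bool" where
  "k_repetitive k f \<longleftrightarrow>
     (\<exists>\<omega>0::nat. \<omega>0 \<ge> 1 \<and>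
       (\<forall>\<alpha> \<beta> al0 (us::'a list list) (als::'a list list) (\<omega>::nat).
          length us = k \<longrightarrow> length als = k \<longrightarrow> \<omega> > 0 \<longrightarrow> \<omega>0 dvd \<omega> \<longrightarrow>
          (let W = Wword al0 us als \<omega>; w = W (replicate k 1) in
           \<exists>F :: nat list \<Rightarrow> nat.
             \<forall>X Y :: nat list. length X = k \<longrightarrow> length Y = k \<longrightarrow>
               (\<forall>i<k. X ! i \<ge> 3) \<longrightarrow> (\<forall>i<k. Y ! i \<ge> 3) \<longrightarrow>
               f (\<alpha> @ wpow w (2 * \<omega> - 1) @ W X @ wpow w (\<omega> - 1) @ W Y @ wpow w \<omega> @ \<beta>)
                 = F (map2 (+) X Y))))"

end

theory Submission
  imports Defs
begin

(*
  Fix omega0 such that x ^ omega0 is idempotent for every x of the finite monoid; then, for every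
  positive multiple omega of omega0, x ^ omega = x ^ omega0 is idempotent as well, and
  mu (u ^ (omega * n)) = mu u ^ omega for n >= 1. Hence mu (W Z) = mu w for all Z >= 1, and with
  m = mu w the idempotency of m ^ omega gives m ^ (2 omega - 1) * m * m ^ (omega - 1) = m ^ (2 omega - 1)
  and m ^ (omega - 1) * m * m ^ omega = m ^ omega. So the bimachine reads W X and W Y in the same
  left and right contexts, while the contexts of the other factors do not depend on X and Y:
  f (alpha w^(2 omega - 1) (W X) w^(omega - 1) (W Y) w^omega beta) = C + g X + g Y.
  Inside W Z the block u_i ^ (omega Z_i) is the Z_i-th power of a word with idempotent image, so all
  its copies of u_i ^ omega but the first and the last are read in one and the same context. Thus
  g Z = g (2, ..., 2) + sum_i (Z_i - 2) s_i, and g X + g Y depends only on X + Y.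
*)

lemma monoid_morphism_Nil: "monoid_morphism mu \<Longrightarrow> mu [] = 1"
  by (simp add: monoid_morphism_def)

lemma monoid_morphism_append: "monoid_morphism mu \<Longrightarrow> mu (u @ v) = mu u * mu v"
  by (simp add: monoid_morphism_def)

lemma monoid_morphism_concat: "monoid_morphism mu \<Longrightarrow> mu (concat ws) = prod_list (map mu ws)"
  by (induction ws) (simp_all add: monoid_morphism_Nil monoid_morphism_append)

lemma wpow_Suc: "wpow u (Suc n) = u @ wpow u n"
  by (simp add: wpow_def)

lemma wpow_mult: "wpow u (m * n) = wpow (wpow u m) n"
  by (induction n) (simp_all add: wpow_def replicate_add)

lemma monoid_morphism_wpow: "monoid_morphism mu \<Longrightarrow> mu (wpow u n) = mu u ^ n"
  by (induction n) (simp_all add: wpow_Suc wpow_def monoid_morphism_Nil monoid_morphism_append)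

lemma idempotent_power_mult:
  assumes "(e::'m::monoid_mult) * e = e"
  shows "e ^ n * e = e" and "e * e ^ n = e"
proof -
  show "e ^ n * e = e"
    by (induction n) (simp_all add: assms mult.assoc)
  then show "e * e ^ n = e"
    by (simp add: power_commutes)
qed

lemma idempotent_power_pos: "(e::'m::monoid_mult) * e = e \<Longrightarrow> 0 < n \<Longrightarrow> e ^ n = e"
  by (cases n) (simp_all add: idempotent_power_mult)

lemma idempotent_power_absorb:
  assumes idem: "(m::'m::monoid_mult) ^ \<omega> * m ^ \<omega> = m ^ \<omega>" and "0 < \<omega>"
  shows "m ^ (2 * \<omega> - 1) * m * m ^ (\<omega> - 1) = m ^ (2 * \<omega> - 1)"
    and "m ^ (\<omega> - 1) * m * m ^ \<omega> = m ^ \<omega>"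
proof -
  obtain n where "\<omega> = Suc n"
    using assms(2) by (cases \<omega>) auto
  then have n: "\<omega> - 1 = n" and "2 * \<omega> - 1 = \<omega> + n" and m: "m ^ n * m = m ^ \<omega>"
    by (simp_all add: power_commutes)
  then have two: "m ^ (2 * \<omega> - 1) = m ^ \<omega> * m ^ n"
    by (simp only: power_add)
  have "m ^ (2 * \<omega> - 1) * m * m ^ (\<omega> - 1) = m ^ \<omega> * (m ^ n * m) * m ^ n"
    by (simp only: two n mult.assoc)
  also have "\<dots> = m ^ (2 * \<omega> - 1)"
    by (simp only: m idem two)
  finally show "m ^ (2 * \<omega> - 1) * m * m ^ (\<omega> - 1) = m ^ (2 * \<omega> - 1)" .
  show "m ^ (\<omega> - 1) * m * m ^ \<omega> = m ^ \<omega>"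
    by (simp only: n m idem)
qed

lemma idempotent_power_multiple:
  assumes "(x::'m::monoid_mult) ^ \<omega>0 * x ^ \<omega>0 = x ^ \<omega>0" and "\<omega>0 dvd \<omega>" and "0 < \<omega>"
  shows "x ^ \<omega> = x ^ \<omega>0"
proof -
  obtain c where "\<omega> = \<omega>0 * c" and "0 < c"
    using assms(2,3) by fastforce
  then show ?thesis
    by (simp add: power_mult idempotent_power_pos assms(1))
qed

lemma finite_monoid_power_idempotent:
  fixes x :: "'m::{monoid_mult, finite}"
  obtains e where "1 \<le> e" and "x ^ e * x ^ e = x ^ e"
proof -
  have "\<not> inj (\<lambda>n::nat. x ^ n)"
  proof
    assume "inj (\<lambda>n::nat. x ^ n)"
    moreover have "finite (range (\<lambda>n::nat. x ^ n))"
      by simp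
    ultimately show False
      using finite_imageD infinite_UNIV_nat by blast
  qed
  then obtain i' j' where "i' \<noteq> j'" and "x ^ i' = x ^ j'"
    unfolding inj_def by blast
  then obtain i j where "i < j" and ij: "x ^ i = x ^ j"
    by (cases "i' < j'") (auto simp: nat_neq_iff)
  define p where "p = j - i"
  \<comment> \<open>From i on the powers of x have period p; a multiple of p that is at least i is idempotent.\<close>
  have shift: "x ^ (n + p) = x ^ n" if "i \<le> n" for n
  proof -
    have "n + p = (n - i) + j"
      using that \<open>i < j\<close> by (simp add: p_def)
    then have "x ^ (n + p) = x ^ (n - i) * x ^ j"
      by (simp only: power_add)
    also have "\<dots> = x ^ (n - i) * x ^ i"
      by (simp only: ij)
    also have "\<dots> = x ^ n"
      using that by (simp flip: power_add)
    finally show ?thesis .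
  qed
  have periodic: "x ^ (n + p * c) = x ^ n" if "i \<le> n" for n c
  proof (induction c)
    case (Suc c)
    have "x ^ (n + p * Suc c) = x ^ ((n + p * c) + p)"
      by (simp add: algebra_simps)
    also have "\<dots> = x ^ (n + p * c)"
      using that by (intro shift) simp
    finally show ?case
      using Suc.IH by simp
  qed simp
  show ?thesis
  proof (rule that)
    have "1 \<le> p"
      using \<open>i < j\<close> by (simp add: p_def)
    then have "i + 1 \<le> p * (i + 1)"
      using mult_le_mono1[OF \<open>1 \<le> p\<close>, of "i + 1"] by simp
    then show "1 \<le> p * (i + 1)"
      by simp
    have "x ^ (p * (i + 1)) * x ^ (p * (i + 1)) = x ^ (p * (i + 1) + p * (i + 1))"
      by (simp only: power_add)
    also have "\<dots> = x ^ (p * (i + 1))"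
      by (rule periodic) (use \<open>i + 1 \<le> p * (i + 1)\<close> in simp)
    finally show "x ^ (p * (i + 1)) * x ^ (p * (i + 1)) = x ^ (p * (i + 1))" .
  qed
qed

lemma finite_monoid_uniform_idempotent_power:
  obtains \<omega>0 :: nat where "1 \<le> \<omega>0" and "\<And>x::'m::{monoid_mult, finite}. x ^ \<omega>0 * x ^ \<omega>0 = x ^ \<omega>0"
proof -
  have "\<forall>x::'m. \<exists>e. 1 \<le> e \<and> x ^ e * x ^ e = x ^ e"
    using finite_monoid_power_idempotent by blast
  then obtain E where E: "\<And>x::'m. 1 \<le> E x \<and> x ^ E x * x ^ E x = x ^ E x"
    by metis
  show ?thesis
  proof (rule that)
    show "1 \<le> (\<Prod>x\<in>UNIV. E x)"
      using E by (simp add: Suc_le_eq prod_pos)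
    fix x :: 'm
    have "x ^ (\<Prod>x\<in>UNIV. E x) = x ^ E x"
      using E \<open>1 \<le> (\<Prod>x\<in>UNIV. E x)\<close>
      by (intro idempotent_power_multiple) (auto intro: dvd_prod_eqI simp: Suc_le_eq)
    then show "x ^ (\<Prod>x\<in>UNIV. E x) * x ^ (\<Prod>x\<in>UNIV. E x) = x ^ (\<Prod>x\<in>UNIV. E x)"
      using E by simp
  qed
qed

(* The contribution of the factor w to the run on a word p @ w @ s with l = mu p and r = mu s. *)
definition bimachine_fun_ctx ::
  "('a list \<Rightarrow> 'm::monoid_mult) \<Rightarrow> ('m \<Rightarrow> 'a \<Rightarrow> 'm \<Rightarrow> nat) \<Rightarrow> 'm \<Rightarrow> 'm \<Rightarrow> 'a list \<Rightarrow> nat" where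
  "bimachine_fun_ctx mu lam l r w =
     (\<Sum>i<length w. lam (l * mu (take i w)) (w ! i) (mu (drop (Suc i) w) * r))"

lemma bimachine_fun_eq_ctx: "bimachine_fun mu lam w = bimachine_fun_ctx mu lam 1 1 w"
  by (simp add: bimachine_fun_def bimachine_fun_ctx_def)

lemma bimachine_fun_ctx_Nil [simp]: "bimachine_fun_ctx mu lam l r [] = 0"
  by (simp add: bimachine_fun_ctx_def)

lemma bimachine_fun_ctx_append:
  assumes "monoid_morphism mu"
  shows "bimachine_fun_ctx mu lam l r (u @ v) =
    bimachine_fun_ctx mu lam l (mu v * r) u + bimachine_fun_ctx mu lam (l * mu u) r v"
proof -
  have sum_split: "(\<Sum>i<length u + length v. g i) = (\<Sum>i<length u. g i) + (\<Sum>i<length v. g (length u + i))"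
    for g :: "nat \<Rightarrow> nat"
    by (induction v) (simp_all add: add.assoc)
  show ?thesis
    unfolding bimachine_fun_ctx_def length_append sum_split
    by (intro arg_cong2[where f = "(+)"] sum.cong refl)
      (simp_all add: nth_append monoid_morphism_append[OF assms] mult.assoc)
qed

lemma bimachine_fun_ctx_concat:
  assumes "monoid_morphism mu"
  shows "bimachine_fun_ctx mu lam l r (concat ws) =
    (\<Sum>i<length ws. bimachine_fun_ctx mu lam (l * prod_list (take i (map mu ws)))
        (prod_list (drop (Suc i) (map mu ws)) * r) (ws ! i))"
proof (induction ws arbitrary: l)
  case (Cons w ws)
  show ?case
    by (simp add: bimachine_fun_ctx_append[OF assms] Cons monoid_morphism_concat[OF assms]
        sum.lessThan_Suc_shift mult.assoc del: sum.lessThan_Suc)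
qed simp

lemma bimachine_fun_ctx_wpow_between_idempotent:
  assumes mm: "monoid_morphism mu" and idem: "mu v * mu v = mu v"
  shows "bimachine_fun_ctx mu lam (l * mu v) (mu v * r) (wpow v n) =
    n * bimachine_fun_ctx mu lam (l * mu v) (mu v * r) v"
proof (induction n)
  case (Suc n)
  have "mu v ^ n * (mu v * r) = mu v * r"
    by (simp add: idempotent_power_mult[OF idem] flip: mult.assoc)
  moreover have "l * mu v * mu v = l * mu v"
    by (simp add: idem mult.assoc)
  ultimately show ?case
    by (simp add: wpow_Suc bimachine_fun_ctx_append[OF mm] monoid_morphism_wpow[OF mm] Suc)
qed (simp add: wpow_def)

lemma bimachine_fun_ctx_wpow_idempotent:
  assumes mm: "monoid_morphism mu" and idem: "mu v * mu v = mu v"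
  shows "bimachine_fun_ctx mu lam l r (wpow v (Suc (Suc n))) =
    bimachine_fun_ctx mu lam l (mu v * r) v
    + n * bimachine_fun_ctx mu lam (l * mu v) (mu v * r) v
    + bimachine_fun_ctx mu lam (l * mu v) r v"
proof -
  have "wpow v (Suc (Suc n)) = v @ wpow v n @ v"
    by (simp add: wpow_def replicate_append_same[symmetric])
  moreover have "mu v ^ n * mu v = mu v" and "l * mu v * mu v ^ n = l * mu v"
    by (simp_all add: idempotent_power_mult[OF idem] mult.assoc)
  ultimately show ?thesis
    by (simp add: bimachine_fun_ctx_append[OF mm] monoid_morphism_append[OF mm]
        monoid_morphism_wpow[OF mm] bimachine_fun_ctx_wpow_between_idempotent[OF mm idem])
qed

lemma bimachine_fun_ctx_wpow_append_affine:
  assumes mm: "monoid_morphism mu" and idem: "mu u ^ \<omega> * mu u ^ \<omega> = mu u ^ \<omega>"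
    and n: "2 \<le> n"
  shows "bimachine_fun_ctx mu lam l r (wpow u (\<omega> * n) @ a) =
    bimachine_fun_ctx mu lam l r (wpow u (\<omega> * 2) @ a)
    + (n - 2) * bimachine_fun_ctx mu lam (l * mu u ^ \<omega>) (mu u ^ \<omega> * mu a * r) (wpow u \<omega>)"
proof -
  define v where "v = wpow u \<omega>"
  have mu_v: "mu v = mu u ^ \<omega>"
    by (simp add: v_def monoid_morphism_wpow[OF mm])
  have idem_v: "mu v * mu v = mu v"
    using idem by (simp add: mu_v)
  have block: "bimachine_fun_ctx mu lam l r (wpow u (\<omega> * Suc (Suc j)) @ a) =
      bimachine_fun_ctx mu lam l (mu v * (mu a * r)) v
      + j * bimachine_fun_ctx mu lam (l * mu v) (mu v * (mu a * r)) v
      + bimachine_fun_ctx mu lam (l * mu v) (mu a * r) v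
      + bimachine_fun_ctx mu lam (l * mu v) r a" for j
  proof -
    have "wpow u (\<omega> * Suc (Suc j)) = wpow v (Suc (Suc j))"
      by (simp only: v_def wpow_mult)
    moreover have "mu (wpow v (Suc (Suc j))) = mu v"
      by (simp add: monoid_morphism_wpow[OF mm] idempotent_power_mult[OF idem_v] idem_v)
    ultimately show ?thesis
      by (simp add: bimachine_fun_ctx_append[OF mm] bimachine_fun_ctx_wpow_idempotent[OF mm idem_v])
  qed
  obtain j where "n = Suc (Suc j)"
    using n by (metis add_2_eq_Suc le_Suc_ex)
  then show ?thesis
    using block[of j] block[of 0] mu_v unfolding v_def by (simp add: mult.assoc numeral_2_eq_2)
qed

definition Wblock :: "'a list list \<Rightarrow> 'a list list \<Rightarrow> nat \<Rightarrow> nat list \<Rightarrow> nat \<Rightarrow> 'a list" where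
  "Wblock us als \<omega> Z i = wpow (us ! i) (\<omega> * Z ! i) @ als ! i"

lemma Wword_eq_concat_Wblock:
  "Wword al0 us als \<omega> Z = al0 @ concat (map (Wblock us als \<omega> Z) [0..<length us])"
  by (simp add: Wword_def Wblock_def [abs_def])

lemma monoid_morphism_Wblock:
  fixes mu :: "'a list \<Rightarrow> 'm::monoid_mult"
  assumes mm: "monoid_morphism mu" and idem: "\<And>x::'m. x ^ \<omega> * x ^ \<omega> = x ^ \<omega>"
    and "1 \<le> Z ! i"
  shows "mu (Wblock us als \<omega> Z i) = mu (us ! i) ^ \<omega> * mu (als ! i)"
  using assms by (simp add: Wblock_def monoid_morphism_append monoid_morphism_wpow power_mult
      idempotent_power_pos)

lemma map_monoid_morphism_Wblock:
  fixes mu :: "'a list \<Rightarrow> 'm::monoid_mult"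
  assumes mm: "monoid_morphism mu" and idem: "\<And>x::'m. x ^ \<omega> * x ^ \<omega> = x ^ \<omega>"
    and "\<forall>i<length us. 1 \<le> Z ! i"
  shows "map mu (map (Wblock us als \<omega> Z) [0..<length us]) =
    map (\<lambda>i. mu (us ! i) ^ \<omega> * mu (als ! i)) [0..<length us]"
  using assms by (simp add: monoid_morphism_Wblock)

lemma monoid_morphism_Wword_eq:
  fixes mu :: "'a list \<Rightarrow> 'm::monoid_mult"
  assumes mm: "monoid_morphism mu" and idem: "\<And>x::'m. x ^ \<omega> * x ^ \<omega> = x ^ \<omega>"
    and "\<forall>i<length us. 1 \<le> Z ! i" and "\<forall>i<length us. 1 \<le> Z' ! i"
  shows "mu (Wword al0 us als \<omega> Z) = mu (Wword al0 us als \<omega> Z')"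
proof -
  have "map mu (map (Wblock us als \<omega> Z) [0..<length us]) =
      map mu (map (Wblock us als \<omega> Z') [0..<length us])"
    using map_monoid_morphism_Wblock[OF mm idem assms(3)] map_monoid_morphism_Wblock[OF mm idem assms(4)]
    by (rule trans[OF _ sym])
  then show ?thesis
    by (simp only: Wword_eq_concat_Wblock monoid_morphism_append[OF mm] monoid_morphism_concat[OF mm])
qed

lemma bimachine_fun_ctx_Wword_affine:
  fixes mu :: "'a list \<Rightarrow> 'm::monoid_mult"
  assumes mm: "monoid_morphism mu" and idem: "\<And>x::'m. x ^ \<omega> * x ^ \<omega> = x ^ \<omega>"
  obtains s where "\<And>Z. length Z = length us \<Longrightarrow> \<forall>i<length us. 2 \<le> Z ! i \<Longrightarrow>
    bimachine_fun_ctx mu lam l r (Wword al0 us als \<omega> Z) =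
      bimachine_fun_ctx mu lam l r (Wword al0 us als \<omega> (replicate (length us) 2))
      + (\<Sum>i<length us. (Z ! i - 2) * s i)"
proof -
  define k where "k = length us"
  define M where "M = map (\<lambda>i. mu (us ! i) ^ \<omega> * mu (als ! i)) [0..<k]"
  define L where "L i = l * mu al0 * prod_list (take i M)" for i
  define R where "R i = prod_list (drop (Suc i) M) * r" for i
  define s where "s i = bimachine_fun_ctx mu lam (L i * mu (us ! i) ^ \<omega>)
    (mu (us ! i) ^ \<omega> * mu (als ! i) * R i) (wpow (us ! i) \<omega>)" for i
  define two where "two = replicate k (2::nat)"
  \<comment> \<open>The image of a block does not depend on Z, hence neither do the contexts L i and R i.\<close>
  have decomp: "bimachine_fun_ctx mu lam l r (Wword al0 us als \<omega> Z) =
      bimachine_fun_ctx mu lam l (prod_list M * r) al0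
      + (\<Sum>i<k. bimachine_fun_ctx mu lam (L i) (R i) (Wblock us als \<omega> Z i))"
    if "\<forall>i<k. 1 \<le> Z ! i" for Z
  proof -
    have "map mu (map (Wblock us als \<omega> Z) [0..<k]) = M"
      using map_monoid_morphism_Wblock[OF mm idem, of us Z als] that by (simp add: M_def k_def)
    then show ?thesis
      unfolding Wword_eq_concat_Wblock bimachine_fun_ctx_append[OF mm] bimachine_fun_ctx_concat[OF mm]
        monoid_morphism_concat[OF mm] k_def[symmetric]
      by (simp add: L_def R_def mult.assoc)
  qed
  have block: "bimachine_fun_ctx mu lam (L i) (R i) (Wblock us als \<omega> Z i) =
      bimachine_fun_ctx mu lam (L i) (R i) (Wblock us als \<omega> two i) + (Z ! i - 2) * s i"
    if "i < k" "2 \<le> Z ! i" for Z i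
    using bimachine_fun_ctx_wpow_append_affine[OF mm idem that(2), of lam "L i" "R i" "us ! i" "als ! i"] that
    by (simp add: Wblock_def two_def s_def)
  show ?thesis
  proof
    fix Z :: "nat list" assume "length Z = length us" and Z: "\<forall>i<length us. 2 \<le> Z ! i"
    then have "bimachine_fun_ctx mu lam l r (Wword al0 us als \<omega> Z) =
        bimachine_fun_ctx mu lam l (prod_list M * r) al0
        + (\<Sum>i<k. bimachine_fun_ctx mu lam (L i) (R i) (Wblock us als \<omega> Z i))"
      using Z by (intro decomp) (auto simp: k_def)
    also have "\<dots> = bimachine_fun_ctx mu lam l (prod_list M * r) al0
        + (\<Sum>i<k. bimachine_fun_ctx mu lam (L i) (R i) (Wblock us als \<omega> two i) + (Z ! i - 2) * s i)"
      using Z by (intro arg_cong2[where f = "(+)"] sum.cong refl) (simp add: block k_def)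
    also have "\<dots> = bimachine_fun_ctx mu lam l r (Wword al0 us als \<omega> two) + (\<Sum>i<k. (Z ! i - 2) * s i)"
      by (simp add: decomp two_def sum.distrib)
    finally show "bimachine_fun_ctx mu lam l r (Wword al0 us als \<omega> Z) =
      bimachine_fun_ctx mu lam l r (Wword al0 us als \<omega> (replicate (length us) 2))
      + (\<Sum>i<length us. (Z ! i - 2) * s i)"
      by (simp add: two_def k_def)
  qed
qed

lemma bimachine_fun_ctx_Wword_add_map2:
  fixes mu :: "'a list \<Rightarrow> 'm::monoid_mult"
  assumes mm: "monoid_morphism mu" and idem: "\<And>x::'m. x ^ \<omega> * x ^ \<omega> = x ^ \<omega>"
  obtains G where "\<And>X Y. length X = length us \<Longrightarrow> length Y = length us \<Longrightarrow>
    \<forall>i<length us. 2 \<le> X ! i \<Longrightarrow> \<forall>i<length us. 2 \<le> Y ! i \<Longrightarrow>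
    bimachine_fun_ctx mu lam l r (Wword al0 us als \<omega> X)
    + bimachine_fun_ctx mu lam l r (Wword al0 us als \<omega> Y) = G (map2 (+) X Y)"
proof -
  obtain s where s: "\<And>Z. length Z = length us \<Longrightarrow> \<forall>i<length us. 2 \<le> Z ! i \<Longrightarrow>
    bimachine_fun_ctx mu lam l r (Wword al0 us als \<omega> Z) =
      bimachine_fun_ctx mu lam l r (Wword al0 us als \<omega> (replicate (length us) 2))
      + (\<Sum>i<length us. (Z ! i - 2) * s i)"
    using bimachine_fun_ctx_Wword_affine[OF mm idem, where us = us and lam = lam and l = l and r = r
        and als = als] by blast
  show ?thesis
  proof
    fix X Y :: "nat list"
    assume len: "length X = length us" "length Y = length us"
      and X: "\<forall>i<length us. 2 \<le> X ! i" and Y: "\<forall>i<length us. 2 \<le> Y ! i"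
    have "(X ! i - 2) * s i + (Y ! i - 2) * s i = (map2 (+) X Y ! i - 4) * s i"
      if "i < length us" for i
    proof -
      have "(X ! i - 2) + (Y ! i - 2) = map2 (+) X Y ! i - 4"
        using that len X Y by simp
      then show ?thesis
        by (metis add_mult_distrib)
    qed
    then have "(\<Sum>i<length us. (X ! i - 2) * s i) + (\<Sum>i<length us. (Y ! i - 2) * s i) =
        (\<Sum>i<length us. (map2 (+) X Y ! i - 4) * s i)"
      by (simp add: sum.distrib[symmetric])
    then show "bimachine_fun_ctx mu lam l r (Wword al0 us als \<omega> X)
        + bimachine_fun_ctx mu lam l r (Wword al0 us als \<omega> Y) =
      2 * bimachine_fun_ctx mu lam l r (Wword al0 us als \<omega> (replicate (length us) 2))
        + (\<Sum>i<length us. (map2 (+) X Y ! i - 4) * s i)"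
      unfolding s[OF len(1) X] s[OF len(2) Y] by simp
  qed
qed

lemma bimachine_fun_ctx_repetition_split:
  assumes mm: "monoid_morphism mu" and idem: "mu w ^ \<omega> * mu w ^ \<omega> = mu w ^ \<omega>" and "0 < \<omega>"
  obtains C L R where "\<And>x y. mu x = mu w \<Longrightarrow> mu y = mu w \<Longrightarrow>
    bimachine_fun_ctx mu lam l r (\<alpha> @ wpow w (2 * \<omega> - 1) @ x @ wpow w (\<omega> - 1) @ y @ wpow w \<omega> @ \<beta>) =
      C + bimachine_fun_ctx mu lam L R x + bimachine_fun_ctx mu lam L R y"
proof -
  define p where "p = \<alpha> @ wpow w (2 * \<omega> - 1)"
  define q where "q = wpow w (\<omega> - 1)"
  define s where "s = wpow w \<omega> @ \<beta>"
  \<comment> \<open>Both x and y are read in the left context l * mu p and the right context mu s * r.\<close>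
  have left: "l' * mu p * mu w * mu q = l' * mu p" for l'
    using idempotent_power_absorb(1)[OF idem \<open>0 < \<omega>\<close>]
    by (simp add: p_def q_def monoid_morphism_append[OF mm] monoid_morphism_wpow[OF mm] mult.assoc)
  have right: "mu q * (mu w * mu s) = mu s"
    using idempotent_power_absorb(2)[OF idem \<open>0 < \<omega>\<close>]
    by (simp add: s_def q_def monoid_morphism_append[OF mm] monoid_morphism_wpow[OF mm] flip: mult.assoc)
  define C where "C = bimachine_fun_ctx mu lam l (mu w * mu s * r) p
    + bimachine_fun_ctx mu lam (l * mu p * mu w) (mu w * mu s * r) q
    + bimachine_fun_ctx mu lam (l * mu p * mu w) r s"
  have "bimachine_fun_ctx mu lam l r (p @ x @ q @ y @ s) =
      C + bimachine_fun_ctx mu lam (l * mu p) (mu s * r) x + bimachine_fun_ctx mu lam (l * mu p) (mu s * r) y"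
    if "mu x = mu w" "mu y = mu w" for x y
    using that by (simp add: C_def bimachine_fun_ctx_append[OF mm] monoid_morphism_append[OF mm] left right)
  then show ?thesis
    by (intro that[of C "l * mu p" "mu s * r"]) (simp add: p_def q_def s_def)
qed

lemma bimachine_fun_ctx_repetition_depends_on_sum:
  fixes mu :: "'a list \<Rightarrow> 'm::monoid_mult" and al0 :: "'a list" and us als :: "'a list list"
  assumes mm: "monoid_morphism mu" and idem: "\<And>x::'m. x ^ \<omega> * x ^ \<omega> = x ^ \<omega>" and "0 < \<omega>"
    and k: "length us = k"
  defines "w \<equiv> Wword al0 us als \<omega> (replicate k 1)"
  shows "\<exists>F. \<forall>X Y. length X = k \<longrightarrow> length Y = k \<longrightarrow> (\<forall>i<k. 3 \<le> X ! i) \<longrightarrow> (\<forall>i<k. 3 \<le> Y ! i) \<longrightarrow>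
    bimachine_fun_ctx mu lam l r (\<alpha> @ wpow w (2 * \<omega> - 1) @ Wword al0 us als \<omega> X @ wpow w (\<omega> - 1)
      @ Wword al0 us als \<omega> Y @ wpow w \<omega> @ \<beta>) = F (map2 (+) X Y)"
proof -
  obtain C L R where split: "\<And>x y. mu x = mu w \<Longrightarrow> mu y = mu w \<Longrightarrow>
    bimachine_fun_ctx mu lam l r (\<alpha> @ wpow w (2 * \<omega> - 1) @ x @ wpow w (\<omega> - 1) @ y @ wpow w \<omega> @ \<beta>) =
      C + bimachine_fun_ctx mu lam L R x + bimachine_fun_ctx mu lam L R y"
    using bimachine_fun_ctx_repetition_split[OF mm idem \<open>0 < \<omega>\<close>, where w = w and lam = lam
        and l = l and r = r and \<alpha> = \<alpha> and \<beta> = \<beta>] by blast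
  obtain G where pair: "\<And>X Y. length X = length us \<Longrightarrow> length Y = length us \<Longrightarrow>
    \<forall>i<length us. 2 \<le> X ! i \<Longrightarrow> \<forall>i<length us. 2 \<le> Y ! i \<Longrightarrow>
    bimachine_fun_ctx mu lam L R (Wword al0 us als \<omega> X)
    + bimachine_fun_ctx mu lam L R (Wword al0 us als \<omega> Y) = G (map2 (+) X Y)"
    using bimachine_fun_ctx_Wword_add_map2[OF mm idem, where us = us and lam = lam and l = L and r = R
        and als = als] by blast
  have mu_W: "mu (Wword al0 us als \<omega> Z) = mu w" if "\<forall>i<k. 3 \<le> Z ! i" for Z
    unfolding w_def using that k by (intro monoid_morphism_Wword_eq[OF mm idem]) auto
  have word_value: "bimachine_fun_ctx mu lam l r (\<alpha> @ wpow w (2 * \<omega> - 1) @ Wword al0 us als \<omega> X @ wpow w (\<omega> - 1)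
      @ Wword al0 us als \<omega> Y @ wpow w \<omega> @ \<beta>) = C + G (map2 (+) X Y)"
    if "length X = k" "length Y = k" and X: "\<forall>i<k. 3 \<le> X ! i" and Y: "\<forall>i<k. 3 \<le> Y ! i" for X Y
  proof -
    have "\<forall>i<length us. 2 \<le> X ! i" and "\<forall>i<length us. 2 \<le> Y ! i"
      using X Y k by auto
    then show ?thesis
      using split[OF mu_W[OF X] mu_W[OF Y]] pair that(1,2) k by simp
  qed
  show ?thesis
    by (intro exI[of _ "\<lambda>S. C + G S"] allI impI) (rule word_value; assumption)
qed

theorem mainTheorem2:
  fixes mu :: "'a::finite list \<Rightarrow> 'm::{monoid_mult, finite}"
    and lam :: "'m \<Rightarrow> 'a \<Rightarrow> 'm \<Rightarrow> nat"
    and k :: nat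
  assumes "monoid_morphism mu"
    and "k \<ge> 1"
  shows "k_repetitive k (bimachine_fun mu lam)"
proof -
  \<comment> \<open>The argument does not use k \<ge> 1: the case k = 0 holds as well.\<close>
  obtain \<omega>0 :: nat where "1 \<le> \<omega>0" and idem0: "\<And>x::'m. x ^ \<omega>0 * x ^ \<omega>0 = x ^ \<omega>0"
    using finite_monoid_uniform_idempotent_power[where 'm = 'm] by blast
  have idem: "x ^ \<omega> * x ^ \<omega> = x ^ \<omega>" if "0 < \<omega>" and "\<omega>0 dvd \<omega>" for \<omega> and x :: 'm
    using idempotent_power_multiple[OF idem0 that(2,1)] idem0 by simp
  show ?thesis
    unfolding k_repetitive_def Let_def bimachine_fun_eq_ctx
    using \<open>1 \<le> \<omega>0\<close> idem by (blast intro: bimachine_fun_ctx_repetition_depends_on_sum[OF assms(1)])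
qed

end
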